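(* Let $p\in(0,1)$. There exists a constant $C_1<\infty$ depending only on $p$ such that the following holds. For every $n\in\mathbb{N}$, let $\xi_1,\dots,\xi_n$ be independent Bernoulli random variables with parameter $p$, and identify a realization with the set $\{i\in[1,n]_{\mathbb{Z}}:\xi_i=1\}$. Then for every Sperner family $\mathcal{A}_n$ of subsets of $[1,n]_{\mathbb{Z}}$, regarded as the event $\{\{i:\xi_i=1\}\in\mathcal{A}_n\}$, we have $\mathbb{P}[\mathcal{A}_n]\le C_1/\sqrt{n}$.
   Context: $[1,n]_{\mathbb{Z}}=\{1,\dots,n\}$. A collection $\mathcal{A}_n$ of subsets of $[1,n]_{\mathbb{Z}}$ is called a Sperner family if for each $A\in\mathcal{A}_n$ at least one of the following holds: (1) there exists $B_A\subset[1,n]_{\mathbb{Z}}\setminus A$ with $|B_A|\ge n/2$ such that every $A'\supset A$ with $A'\cap B_A\neq\emptyset$ satisfies $A'\notin\mathcal{A}_n$; (2) there exists $B'_A\subset A$ with $|B'_A|\ge n/2$ such that every $A'\subset A$ with $B'_A\setminus A'\ne\emptyset$ satisfies $A'\notin\mathcal{A}_n$. *)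

theory Defs
  imports Complex_Main
begin

definition sperner_family :: "nat \<Rightarrow> nat set set \<Rightarrow> bool" where
  "sperner_family n \<A> \<longleftrightarrow>
     \<A> \<subseteq> Pow {1..n} \<and>
     (\<forall>A\<in>\<A>.
        (\<exists>B. B \<subseteq> {1..n} - A \<and> real (card B) \<ge> real n / 2 \<and>
             (\<forall>A'. A \<subseteq> A' \<and> A' \<inter> B \<noteq> {} \<longrightarrow> A' \<notin> \<A>))
      \<or> (\<exists>B'. B' \<subseteq> A \<and> real (card B') \<ge> real n / 2 \<and>
             (\<forall>A'. A' \<subseteq> A \<and> B' - A' \<noteq> {} \<longrightarrow> A' \<notin> \<A>)))"

text \<open>Probability that the random set {i \<in> {1..n}. xi_i = 1}, with xi_1..xi_n
  i.i.d. Bernoulli(p), lies in the family \<A> (product measure written out).\<close>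
definition bernoulli_set_prob :: "real \<Rightarrow> nat \<Rightarrow> nat set set \<Rightarrow> real" where
  "bernoulli_set_prob p n \<A> =
     (\<Sum>S\<in>\<A> \<inter> Pow {1..n}. p ^ card S * (1 - p) ^ (n - card S))"

end

theory Submission
  imports Defs "HOL-Analysis.Weierstrass_Theorems" "HOL-Combinatorics.Multiset_Permutations"
begin

(* A set of size k has probability p^k (1-p)^(n-k) = b(k) / (n choose k), where b(k) is the
   binomial weight Bernstein n k p.  Every weight satisfies b(k) <= 8 / sqrt(p(1-p)n): starting
   below the mean, the next sqrt(p(1-p)n)/4 weights are each at least b(k)/2 by the ratio
   b(j+1)/b(j) = (n-j)p / ((j+1)(1-p)), and all weights sum to 1.  It remains to show the
   LYM-type bound  sum over A in the family of 1/(n choose |A|) <= 4.  Sets of the second kind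
   become sets of the first kind after complementation, so consider a family in which every A
   comes with B_A, |B_A| >= n/2, disjoint from all larger members.  The permutations of [1,n]
   that list A first and then an element of B_A form at least a 1/(2 (n choose |A|)) fraction
   of all permutations, and these classes are disjoint for distinct members. *)

lemma Bernstein_Suc_ratio:
  "Bernstein n (Suc j) x * Suc j * (1 - x) = Bernstein n j x * (n - j) * x"
proof (cases "j < n")
  case True
  have "(n choose Suc j) * Suc j = (n choose j) * (n - j)"
    by (metis binomial_absorption binomial_absorb_comp mult.commute)
  then have binom: "real (n choose Suc j) * Suc j = real (n choose j) * (n - j)"
    by (metis of_nat_mult)
  have pow: "(1 - x) ^ (n - Suc j) * (1 - x) = (1 - x) ^ (n - j)"
    by (metis Suc_diff_Suc True power_Suc2)
  have "Bernstein n (Suc j) x * Suc j * (1 - x)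
      = (real (n choose Suc j) * Suc j) * x ^ j * x * ((1 - x) ^ (n - Suc j) * (1 - x))"
    by (simp add: Bernstein_def mult_ac)
  also have "\<dots> = Bernstein n j x * (n - j) * x"
    unfolding binom pow by (simp add: Bernstein_def mult_ac)
  finally show ?thesis .
qed (simp add: Bernstein_def)

lemma Bernstein_Suc_ge:
  fixes x d :: real
  assumes x: "0 < x" "x < 1" and "j < n" and "0 \<le> d"
    and "real (Suc j) \<le> (real n + 1) * x + d"
  shows "(1 - d / ((real n + 1) * x * (1 - x))) * Bernstein n j x \<le> Bernstein n (Suc j) x"
proof -
  define e where "e = d / ((real n + 1) * x * (1 - x))"
  have e0: "0 \<le> e" and ed: "e * ((real n + 1) * x * (1 - x)) = d"
    using x \<open>0 \<le> d\<close> by (simp_all add: e_def)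
  have "(1 - e) * Suc j * (1 - x) \<le> (real n - j) * x"
  proof (cases "real (Suc j) \<le> (real n + 1) * x")
    case True
    then have "Suc j * (1 - x) \<le> (real n - j) * x" by (simp add: algebra_simps)
    moreover have "(1 - e) * Suc j * (1 - x) \<le> Suc j * (1 - x)" using e0 x by simp
    ultimately show ?thesis by linarith
  next
    case False
    then have "(real n + 1) * x * (1 - x) * e \<le> Suc j * (1 - x) * e"
      using e0 x by (intro mult_right_mono) auto
    then have "d \<le> e * (Suc j * (1 - x))" using ed by (simp add: algebra_simps)
    then show ?thesis using assms(5) by (simp add: algebra_simps)
  qed
  then have "Bernstein n j x * ((1 - e) * Suc j * (1 - x)) \<le> Bernstein n j x * ((n - j) * x)"
    using Bernstein_nonneg[of x n j] x \<open>j < n\<close>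
    by (intro mult_left_mono) (auto simp: of_nat_diff less_imp_le)
  also have "\<dots> = Bernstein n (Suc j) x * (Suc j * (1 - x))"
    using Bernstein_Suc_ratio[of n j x] by (simp add: algebra_simps)
  finally have "((1 - e) * Bernstein n j x) * (Suc j * (1 - x))
      \<le> Bernstein n (Suc j) x * (Suc j * (1 - x))"
    by (simp add: algebra_simps)
  moreover have "0 < Suc j * (1 - x)" using x by simp
  ultimately have "(1 - e) * Bernstein n j x \<le> Bernstein n (Suc j) x"
    by (rule mult_right_le_imp_le)
  then show ?thesis by (simp only: e_def)
qed

lemma Bernstein_shift_ge:
  fixes x d :: real
  assumes x: "0 < x" "x < 1" and "k + i \<le> n" and k: "real k \<le> (real n + 1) * x"
    and "real i \<le> d" and "d \<le> (real n + 1) * x * (1 - x)"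
  shows "(1 - i * (d / ((real n + 1) * x * (1 - x)))) * Bernstein n k x \<le> Bernstein n (k + i) x"
proof -
  define e where "e = d / ((real n + 1) * x * (1 - x))"
  have "0 \<le> d" using \<open>real i \<le> d\<close> by linarith
  then have e: "0 \<le> e" "e \<le> 1" using assms by (simp_all add: e_def)
  have power_bound: "(1 - e) ^ i * Bernstein n k x \<le> Bernstein n (k + i) x"
    using \<open>k + i \<le> n\<close> \<open>real i \<le> d\<close>
  proof (induction i)
    case (Suc i)
    have "(1 - e) * ((1 - e) ^ i * Bernstein n k x) \<le> (1 - e) * Bernstein n (k + i) x"
      using Suc e by (intro mult_left_mono) auto
    also have "\<dots> \<le> Bernstein n (Suc (k + i)) x"
      using Bernstein_Suc_ge[OF x, of "k + i" n d] Suc.prems k by (simp add: e_def)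
    finally show ?case by simp
  qed simp
  have "1 - i * e \<le> (1 - e) ^ i"
    using Bernoulli_inequality[of "- e" i] e by simp
  then have "(1 - i * e) * Bernstein n k x \<le> (1 - e) ^ i * Bernstein n k x"
    using Bernstein_nonneg[of x n k] x by (intro mult_right_mono) auto
  from this power_bound have "(1 - i * e) * Bernstein n k x \<le> Bernstein n (k + i) x"
    by (rule order_trans)
  then show ?thesis by (simp only: e_def)
qed

lemma Bernstein_le_below_mean:
  fixes x :: real
  assumes x: "0 < x" "x < 1" and "0 < n" and k: "real k \<le> (real n + 1) * x"
  shows "Bernstein n k x \<le> 8 / sqrt (x * (1 - x) * n)"
proof -
  define c where "c = x * (1 - x)"
  define D where "D = (real n + 1) * x * (1 - x)"
  define s where "s = sqrt (c * n)"
  define t where "t = nat \<lfloor>s / 4\<rfloor>"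
  have "c \<le> 1 - x" using x mult_right_mono[of x 1 "1 - x"] by (simp add: c_def)
  then have c_le: "c * n \<le> (1 - x) * n" by (rule mult_right_mono) simp
  have c: "0 < c" using x by (simp add: c_def)
  have "D = (real n + 1) * c" by (simp add: D_def c_def mult.assoc)
  then have D: "0 < D" "c * n \<le> D" using c by (simp, simp add: algebra_simps)
  have s: "0 < s" "s * s = c * n" using c \<open>0 < n\<close> by (auto simp: s_def)
  have t: "real t \<le> s / 4" "s / 4 < real t + 1" using s by (auto simp: t_def) linarith+
  have "real t * real t \<le> (s / 4) * (s / 4)" using t by (intro mult_mono) auto
  then have tt: "real t * real t \<le> c * n / 16" using s by simp
  have "real t \<le> real t * real t" by (cases t) auto
  with tt have t_le: "real t \<le> c * n / 16" by linarith
  have "k + t \<le> n"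
  proof (cases "t = 0")
    case False
    then have "4 \<le> s" using t by simp
    then have "4 * 4 \<le> s * s" by (intro mult_mono) auto
    then have "16 \<le> c * n" using s by simp
    \<comment> \<open>so both \<open>t\<close> and \<open>x\<close> are at most \<open>(1 - x) n / 16\<close>\<close>
    then show ?thesis using k t_le c_le x by (simp add: algebra_simps)
  next
    case True
    have "(real n + 1) * x < real n + 1" using mult_strict_left_mono[of x 1 "real n + 1"] x by simp
    then have "real k < real n + 1" using k by linarith
    then show ?thesis using True by simp
  qed
  have half: "1 / 2 \<le> 1 - real i * (real t / D)" if "i \<le> t" for i
  proof -
    have "real i * (real t / D) \<le> real t * (real t / D)"
      using that D by (intro mult_right_mono) auto
    also have "\<dots> \<le> 1 / 2" using tt D by (simp add: field_simps)
    finally show ?thesis by linarith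
  qed
  have "(\<Sum>i\<le>t. 1 / 2 * Bernstein n k x) \<le> (\<Sum>i\<le>t. Bernstein n (k + i) x)"
  proof (rule sum_mono)
    fix i assume "i \<in> {..t}"
    then have "1 / 2 * Bernstein n k x \<le> (1 - real i * (real t / D)) * Bernstein n k x"
      using half Bernstein_nonneg[of x n k] x by (intro mult_right_mono) auto
    also have "\<dots> \<le> Bernstein n (k + i) x"
      using \<open>i \<in> {..t}\<close> \<open>k + t \<le> n\<close> k t_le D x unfolding D_def
      by (intro Bernstein_shift_ge) auto
    finally show "1 / 2 * Bernstein n k x \<le> Bernstein n (k + i) x" .
  qed
  also have "\<dots> = (\<Sum>j\<in>(+) k ` {..t}. Bernstein n j x)"
    by (simp add: sum.reindex)
  also have "\<dots> \<le> (\<Sum>j\<le>n. Bernstein n j x)"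
    using \<open>k + t \<le> n\<close> x by (intro sum_mono2) (auto intro: Bernstein_nonneg)
  finally have "(real t + 1) * Bernstein n k x \<le> 2" by (simp add: add.commute)
  then have "Bernstein n k x \<le> 2 / (real t + 1)" by (simp add: field_simps)
  also have "\<dots> \<le> 2 / (s / 4)" using t s by (intro divide_left_mono) auto
  finally show ?thesis by (simp add: s_def c_def)
qed

lemma Bernstein_symmetric: "k \<le> n \<Longrightarrow> Bernstein n (n - k) (1 - x) = Bernstein n k x"
  by (simp add: Bernstein_def binomial_symmetric[symmetric] algebra_simps)

lemma Bernstein_le_inverse_sqrt:
  fixes x :: real
  assumes x: "0 < x" "x < 1" and "0 < n"
  shows "Bernstein n k x \<le> 8 / sqrt (x * (1 - x) * n)"
proof -
  consider "real k \<le> (real n + 1) * x" | "k \<le> n" "\<not> real k \<le> (real n + 1) * x" | "n < k"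
    by linarith
  then show ?thesis
  proof cases
    case 1
    then show ?thesis using Bernstein_le_below_mean x \<open>0 < n\<close> by blast
  next
    case 2
    then have "real (n - k) \<le> (real n + 1) * (1 - x)"
      by (simp add: of_nat_diff algebra_simps)
    then have "Bernstein n (n - k) (1 - x) \<le> 8 / sqrt ((1 - x) * (1 - (1 - x)) * n)"
      using x \<open>0 < n\<close> by (intro Bernstein_le_below_mean) auto
    then show ?thesis using Bernstein_symmetric[OF \<open>k \<le> n\<close>] by (simp add: mult.commute)
  next
    case 3
    then have "Bernstein n k x = 0" by (simp add: Bernstein_def)
    then show ?thesis using x by simp
  qed
qed

definition perms_exiting_into :: "'a set \<Rightarrow> 'a set \<Rightarrow> 'a set \<Rightarrow> 'a list set" where
  "perms_exiting_into U A B =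
     {xs \<in> permutations_of_set U. set (take (card A) xs) = A \<and> xs ! card A \<in> B}"

lemma card_perms_exiting_into_ge:
  assumes "finite U" and "A \<subseteq> U" and "B \<subseteq> U - A"
  shows "fact (card A) * card B * fact (card U - card A - 1) \<le> card (perms_exiting_into U A B)"
proof -
  define T where "T = permutations_of_set A \<times> Sigma B (\<lambda>b. permutations_of_set (U - A - {b}))"
  define glue where "glue = (\<lambda>(ys, b, zs). ys @ b # (zs :: 'a list))"
  have finA: "finite A" using assms finite_subset by blast
  have len: "length ys = card A" if "ys \<in> permutations_of_set A" for ys
    using that length_finite_permutations_of_set by blast
  have card_rest: "card (U - A - {b}) = card U - card A - 1" if "b \<in> B" for b
    using that assms finA by (simp add: card_Diff_subset card_Diff_singleton subset_iff)
  have "card T = fact (card A) * card B * fact (card U - card A - 1)"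
    using finA finite_subset[OF assms(3)] assms(1)
    by (simp add: T_def card_cartesian_product card_SigmaI card_rest)
  moreover have "inj_on glue T"
    by (rule inj_onI) (auto simp: T_def glue_def len)
  moreover have "glue ` T \<subseteq> perms_exiting_into U A B"
  proof safe
    fix ys b zs assume "(ys, b, zs) \<in> T"
    then have "set ys = A" "distinct ys" "length ys = card A" "b \<in> B"
      and "set zs = U - A - {b}" "distinct zs"
      using len by (auto simp: T_def dest: permutations_of_setD)
    then show "glue (ys, b, zs) \<in> perms_exiting_into U A B"
      using assms(2,3)
      by (auto simp: glue_def perms_exiting_into_def nth_append intro!: permutations_of_setI)
  qed
  then have "card (glue ` T) \<le> card (perms_exiting_into U A B)"
    by (intro card_mono) (simp_all add: perms_exiting_into_def)
  ultimately show ?thesis by (simp add: card_image)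
qed

lemma perms_exiting_into_nested:
  assumes "xs \<in> perms_exiting_into U A B" and "xs \<in> perms_exiting_into U A' B'"
    and "card A < card A'"
  shows "A \<subset> A'" and "A' \<inter> B \<noteq> {}"
proof -
  have A: "set (take (card A) xs) = A" "xs ! card A \<in> B"
    and A': "set (take (card A') xs) = A'"
    using assms(1,2) by (simp_all add: perms_exiting_into_def)
  have "card A' \<le> length xs"
    using card_length[of "take (card A') xs"] A' by simp
  then have "xs ! card A \<in> A'"
    using assms(3) A' by (metis in_set_conv_nth length_take min.absorb2 nth_take order.strict_trans2)
  moreover have "A \<subseteq> A'"
    using A(1) A' set_take_subset_set_take assms(3) by (metis less_imp_le)
  ultimately show "A' \<inter> B \<noteq> {}" using A(2) by blast
  show "A \<subset> A'" using \<open>A \<subseteq> A'\<close> assms(3) by auto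
qed

lemma sum_exit_counts_le_fact:
  assumes U: "finite U" and F: "F \<subseteq> Pow U" and B: "\<And>A. A \<in> F \<Longrightarrow> B A \<subseteq> U - A"
    and blocked: "\<And>A A'. A \<in> F \<Longrightarrow> A' \<in> F \<Longrightarrow> A \<subset> A' \<Longrightarrow> A' \<inter> B A = {}"
  shows "(\<Sum>A\<in>F. fact (card A) * card (B A) * fact (card U - card A - 1)) \<le> fact (card U)"
proof -
  let ?P = "\<lambda>A. perms_exiting_into U A (B A)"
  have same: "A = A'"
    if "A \<in> F" "A' \<in> F" "xs \<in> ?P A" "xs \<in> ?P A'" "card A \<le> card A'" for A A' xs
  proof (cases "card A = card A'")
    case True
    then show ?thesis using that(3,4) by (simp add: perms_exiting_into_def)
  next
    case False
    then have "card A < card A'" using that(5) by simp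
    then show ?thesis
      using perms_exiting_into_nested[OF that(3,4)] blocked[OF that(1,2)] by blast
  qed
  have disjoint: "?P A \<inter> ?P A' = {}" if "A \<in> F" "A' \<in> F" "A \<noteq> A'" for A A'
    using same[of A A'] same[of A' A] that nat_le_linear by blast
  have finF: "finite F" using F U by (simp add: finite_subset)
  have "(\<Sum>A\<in>F. fact (card A) * card (B A) * fact (card U - card A - 1))
      \<le> (\<Sum>A\<in>F. card (?P A))"
    using F B U by (intro sum_mono card_perms_exiting_into_ge) auto
  also have "\<dots> = card (\<Union>A\<in>F. ?P A)"
    using finF disjoint by (intro card_UN_disjoint[symmetric]) (auto simp: perms_exiting_into_def)
  also have "\<dots> \<le> card (permutations_of_set U)"
    by (intro card_mono) (auto simp: perms_exiting_into_def)
  finally show ?thesis using U by simp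
qed

lemma inverse_binomial_le:
  assumes "k < n" and "n \<le> 2 * b"
  shows "1 / real (n choose k) \<le> 2 * (fact k * b * fact (n - k - 1)) / fact n"
proof -
  have "fact (n - k) = real (n - k) * fact (n - k - 1)"
    using assms(1) by (metis Suc_diff_Suc diff_Suc_1 fact_Suc minus_nat.diff_Suc)
  also have "\<dots> \<le> 2 * b * fact (n - k - 1)"
    using assms by (intro mult_right_mono) auto
  finally have "fact k * fact (n - k) \<le> (fact k * (2 * b * fact (n - k - 1)) :: real)"
    by (intro mult_left_mono) auto
  then have "fact k * fact (n - k) / fact n \<le> 2 * (fact k * b * fact (n - k - 1)) / (fact n :: real)"
    by (intro divide_right_mono) (auto simp: algebra_simps)
  then show ?thesis using assms(1) by (simp add: binomial_fact)
qed

lemma sum_inverse_binomial_upward_blocked_le: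
  assumes U: "finite U" "U \<noteq> {}" and F: "F \<subseteq> Pow U"
    and B: "\<And>A. A \<in> F \<Longrightarrow> B A \<subseteq> U - A \<and> card U \<le> 2 * card (B A)"
    and blocked: "\<And>A A'. A \<in> F \<Longrightarrow> A' \<in> F \<Longrightarrow> A \<subset> A' \<Longrightarrow> A' \<inter> B A = {}"
  shows "(\<Sum>A\<in>F. 1 / real (card U choose card A)) \<le> 2"
proof -
  let ?n = "card U"
  let ?w = "\<lambda>A. fact (card A) * card (B A) * fact (?n - card A - 1)"
  have lt: "card A < ?n" if "A \<in> F" for A
  proof -
    have "B A \<noteq> {}" using B[OF that] U by (auto simp: card_gt_0_iff)
    then have "A \<subset> U" using B[OF that] F that by blast
    then show ?thesis using U by (simp add: psubset_card_mono)
  qed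
  have "1 / real (?n choose card A) \<le> 2 * real (?w A) / fact ?n" if "A \<in> F" for A
    using inverse_binomial_le[OF lt[OF that], of "card (B A)"] B[OF that] by (simp add: of_nat_fact)
  then have "(\<Sum>A\<in>F. 1 / real (?n choose card A)) \<le> (\<Sum>A\<in>F. 2 * real (?w A) / fact ?n)"
    by (rule sum_mono)
  also have "\<dots> = 2 * real (\<Sum>A\<in>F. ?w A) / fact ?n"
    by (simp add: sum_divide_distrib sum_distrib_left)
  also have "\<dots> \<le> 2 * fact ?n / fact ?n"
  proof -
    have "(\<Sum>A\<in>F. ?w A) \<le> fact ?n"
      by (rule sum_exit_counts_le_fact[OF U(1) F]) (use B blocked in auto)
    then have "real (\<Sum>A\<in>F. ?w A) \<le> fact ?n" by (metis of_nat_fact of_nat_le_iff)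
    then show ?thesis by (intro divide_right_mono mult_left_mono) auto
  qed
  finally show ?thesis by simp
qed

lemma sum_inverse_binomial_downward_blocked_le:
  assumes U: "finite U" "U \<noteq> {}" and F: "F \<subseteq> Pow U"
    and B: "\<And>A. A \<in> F \<Longrightarrow> B A \<subseteq> A \<and> card U \<le> 2 * card (B A)"
    and blocked: "\<And>A A'. A \<in> F \<Longrightarrow> A' \<in> F \<Longrightarrow> A' \<subset> A \<Longrightarrow> B A \<subseteq> A'"
  shows "(\<Sum>A\<in>F. 1 / real (card U choose card A)) \<le> 2"
proof -
  have compl: "U - (U - A) = A" if "A \<in> F" for A using that F by blast
  have card_compl: "card U choose card (U - A) = card U choose card A" if "A \<in> F" for A
  proof -
    have "A \<subseteq> U" using that F by auto
    moreover from this have "finite A" using U(1) finite_subset by blast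
    ultimately show ?thesis
      using binomial_symmetric[OF card_mono[OF U(1)]] by (simp add: card_Diff_subset)
  qed
  have "inj_on ((-) U) F" using compl by (rule inj_on_inverseI)
  then have "(\<Sum>D\<in>(-) U ` F. 1 / real (card U choose card D))
      = (\<Sum>A\<in>F. 1 / real (card U choose card (U - A)))"
    by (simp add: sum.reindex)
  also have "\<dots> = (\<Sum>A\<in>F. 1 / real (card U choose card A))"
    using card_compl by simp
  finally have "(\<Sum>A\<in>F. 1 / real (card U choose card A))
      = (\<Sum>D\<in>(-) U ` F. 1 / real (card U choose card D))" ..
  also have "\<dots> \<le> 2"
  proof (rule sum_inverse_binomial_upward_blocked_le[OF U, where B = "\<lambda>D. B (U - D)"])
    show "(-) U ` F \<subseteq> Pow U" by blast
    show "B (U - D) \<subseteq> U - D \<and> card U \<le> 2 * card (B (U - D))" if D: "D \<in> (-) U ` F" for D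
    proof -
      obtain A where "A \<in> F" "D = U - A" using D by blast
      then show ?thesis using B[of A] compl[of A] by auto
    qed
    show "D' \<inter> B (U - D) = {}" if D: "D \<in> (-) U ` F" "D' \<in> (-) U ` F" "D \<subset> D'" for D D'
    proof -
      obtain A A' where A: "A \<in> F" "D = U - A" and A': "A' \<in> F" "D' = U - A'"
        using D(1,2) by blast
      then have "A' \<subset> A" using D(3) F by blast
      then have "B A \<subseteq> A'" by (rule blocked[OF A(1) A'(1)])
      then show ?thesis using A A' compl by auto
    qed
  qed
  finally show ?thesis .
qed

lemma sperner_family_sum_inverse_binomial_le:
  assumes sp: "sperner_family n \<A>" and "1 \<le> n"
  shows "(\<Sum>A\<in>\<A>. 1 / real (n choose card A)) \<le> 4"
proof -
  let ?up = "\<lambda>A B. B \<subseteq> {1..n} - A \<and> real n / 2 \<le> real (card B) \<and>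
                 (\<forall>A'. A \<subseteq> A' \<and> A' \<inter> B \<noteq> {} \<longrightarrow> A' \<notin> \<A>)"
  let ?down = "\<lambda>A B. B \<subseteq> A \<and> real n / 2 \<le> real (card B) \<and>
                 (\<forall>A'. A' \<subseteq> A \<and> B - A' \<noteq> {} \<longrightarrow> A' \<notin> \<A>)"
  define F1 where "F1 = {A \<in> \<A>. \<exists>B. ?up A B}"
  define F2 where "F2 = \<A> - F1"
  have \<A>: "\<A> \<subseteq> Pow {1..n}" and "\<forall>A\<in>F2. \<exists>B. ?down A B"
    using sp by (auto simp: sperner_family_def F1_def F2_def)
  then obtain B2 where B2: "\<And>A. A \<in> F2 \<Longrightarrow> ?down A (B2 A)" by metis
  have "\<forall>A\<in>F1. \<exists>B. ?up A B" by (simp add: F1_def)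
  then obtain B1 where B1: "\<And>A. A \<in> F1 \<Longrightarrow> ?up A (B1 A)" by metis
  have U: "finite {1..n}" "{1..n} \<noteq> {}" "card {1..n} = n" using \<open>1 \<le> n\<close> by auto
  have twice_card: "n \<le> 2 * card B" if "real n / 2 \<le> real (card B)" for B :: "nat set"
    using that by linarith
  have "(\<Sum>A\<in>F1. 1 / real (n choose card A)) \<le> 2"
  proof (rule sum_inverse_binomial_upward_blocked_le[OF U(1,2), of F1 B1, unfolded U(3)])
    show "F1 \<subseteq> Pow {1..n}" using \<A> by (auto simp: F1_def)
    show "B1 A \<subseteq> {1..n} - A \<and> n \<le> 2 * card (B1 A)" if "A \<in> F1" for A
      using B1[OF that] twice_card by blast
    show "A' \<inter> B1 A = {}" if "A \<in> F1" "A' \<in> F1" "A \<subset> A'" for A A'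
      using B1[OF that(1)] that(2,3) by (auto simp: F1_def)
  qed
  moreover have "(\<Sum>A\<in>F2. 1 / real (n choose card A)) \<le> 2"
  proof (rule sum_inverse_binomial_downward_blocked_le[OF U(1,2), of F2 B2, unfolded U(3)])
    show "F2 \<subseteq> Pow {1..n}" using \<A> by (auto simp: F2_def)
    show "B2 A \<subseteq> A \<and> n \<le> 2 * card (B2 A)" if "A \<in> F2" for A
      using B2[OF that] twice_card by blast
    show "B2 A \<subseteq> A'" if "A \<in> F2" "A' \<in> F2" "A' \<subset> A" for A A'
      using B2[OF that(1)] that(2,3) by (auto simp: F2_def)
  qed
  moreover have "(\<Sum>A\<in>\<A>. 1 / real (n choose card A))
      = (\<Sum>A\<in>F2. 1 / real (n choose card A)) + (\<Sum>A\<in>F1. 1 / real (n choose card A))"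
    unfolding F2_def using finite_subset[OF \<A>] by (intro sum.subset_diff) (auto simp: F1_def)
  ultimately show ?thesis by linarith
qed

theorem proposition2p2:
  fixes p :: real
  assumes "0 < p" and "p < 1"
  shows "\<exists>C1::real. \<forall>n::nat. n \<ge> 1 \<longrightarrow> (\<forall>\<A>. sperner_family n \<A> \<longrightarrow>
           bernoulli_set_prob p n \<A> \<le> C1 / sqrt (real n))"
proof (intro exI allI impI)
  fix n :: nat and \<A> :: "nat set set"
  assume n: "1 \<le> n" and sp: "sperner_family n \<A>"
  define M where "M = 8 / sqrt (p * (1 - p) * n)"
  have \<A>: "\<A> \<subseteq> Pow {1..n}" using sp by (simp add: sperner_family_def)
  have "p ^ card S * (1 - p) ^ (n - card S) \<le> M * (1 / real (n choose card S))" if "S \<in> \<A>" for S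
  proof -
    have "card S \<le> n" using that \<A> card_mono[of "{1..n}" S] by auto
    then have "p ^ card S * (1 - p) ^ (n - card S) = Bernstein n (card S) p / real (n choose card S)"
      by (simp add: Bernstein_def)
    also have "\<dots> \<le> M / real (n choose card S)"
      using Bernstein_le_inverse_sqrt assms n
      by (intro divide_right_mono) (auto simp: M_def)
    finally show ?thesis by simp
  qed
  then have "bernoulli_set_prob p n \<A> \<le> (\<Sum>S\<in>\<A>. M * (1 / real (n choose card S)))"
    unfolding bernoulli_set_prob_def using \<A> by (simp add: Int_absorb2 sum_mono)
  also have "\<dots> = M * (\<Sum>S\<in>\<A>. 1 / real (n choose card S))"
    by (simp add: sum_distrib_left)
  also have "\<dots> \<le> M * 4"
    using sperner_family_sum_inverse_binomial_le[OF sp n] assms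
    by (intro mult_left_mono) (auto simp: M_def)
  also have "\<dots> = (32 / sqrt (p * (1 - p))) / sqrt (real n)"
    by (simp add: M_def real_sqrt_mult)
  finally show "bernoulli_set_prob p n \<A> \<le> (32 / sqrt (p * (1 - p))) / sqrt (real n)" .
qed

end
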